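(* With the notation of the context, let $\bm x_\alpha,\bm x_\beta$ be sample points and let $\bm y_0=\bm x_\alpha,\bm y_1,\dots,\bm y_m=\bm x_\beta$ be all the sample points lying on the closed segment $[\bm x_\alpha,\bm x_\beta]$, ordered along the segment, with associated affine functions $v_0,\dots,v_m$ (the local pieces of $u^*$ at these sample points). Assume that for every $r=0,\dots,m-1$, $$\big(v_r(\bm y_r)-v_{r+1}(\bm y_r)\big)\cdot\big(v_r(\bm y_{r+1})-v_{r+1}(\bm y_{r+1})\big)\le 0$$ (this is the termination condition of the bisection procedure that repeatedly inserts midpoints between consecutive sample points on the segment whenever the two signs agree). Then for all sample points $\bm x_i,\bm x_k$ lying on $[\bm x_\alpha,\bm x_\beta]$, $$\min_{j\in J_{\geq,i}}u_j(\bm x_k)\le u_k(\bm x_k)\qquad\text{and}\qquad \max_{j\in J_{\leq,i}}u_j(\bm x_k)\ge u_k(\bm x_k).$$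
   Context: Let $\Omega\subseteq\mathbb{R}^{n_x}$ be a convex polyhedron and $u^*:\Omega\to\mathbb{R}$ a continuous piecewise affine (PWA) function: $\Omega$ is the union of finitely many closed convex polyhedra (local regions) with pairwise disjoint interiors, and on each local region $u^*$ coincides with an affine function (its local piece). Sample points $\bm x_1,\dots,\bm x_{N_s}\in\Omega$ are given, each lying in the interior of a unique order (UO) region $\Gamma(\bm x_i)$ (a closed polyhedron inside a local region on whose interior the order of all distinct local pieces of $u^*$ is constant; equivalently, no two distinct local pieces of $u^*$ take equal values at $\bm x_i$), and $u_i$ denotes the local piece of $u^*$ on $\Gamma(\bm x_i)$, so $u_i(\bm x_i)=u^*(\bm x_i)$. Define $J_{\geq,i}=\{j\in\{1,\dots,N_s\}: u_j(\bm x_i)\ge u_i(\bm x_i)\}$ and $J_{\leq,i}=\{j\in\{1,\dots,N_s\}: u_j(\bm x_i)\le u_i(\bm x_i)\}$. *)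

theory Defs
  imports "HOL-Analysis.Analysis"
begin

definition affine_fun :: "('a::euclidean_space \<Rightarrow> real) \<Rightarrow> bool" where
  "affine_fun f \<longleftrightarrow> (\<exists>c d. \<forall>x. f x = inner c x + d)"

definition is_cont_pwa ::
  "'a::euclidean_space set \<Rightarrow> ('a \<Rightarrow> real) \<Rightarrow> nat \<Rightarrow> (nat \<Rightarrow> 'a set) \<Rightarrow> (nat \<Rightarrow> 'a \<Rightarrow> real) \<Rightarrow> bool" where
  "is_cont_pwa \<Omega> u L R p \<longleftrightarrow>
     continuous_on \<Omega> u \<and>
     \<Omega> = (\<Union>l<L. R l) \<and>
     (\<forall>l<L. polyhedron (R l) \<and> convex (R l) \<and> closed (R l) \<and> affine_fun (p l) \<and>
            (\<forall>x\<in>R l. u x = p l x)) \<and>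
     (\<forall>l1<L. \<forall>l2<L. l1 \<noteq> l2 \<longrightarrow> interior (R l1) \<inter> interior (R l2) = {})"

definition uo_region ::
  "'a::euclidean_space set \<Rightarrow> nat \<Rightarrow> (nat \<Rightarrow> 'a set) \<Rightarrow> (nat \<Rightarrow> 'a \<Rightarrow> real) \<Rightarrow> bool" where
  "uo_region \<Gamma> L R p \<longleftrightarrow>
     closed \<Gamma> \<and> polyhedron \<Gamma> \<and> (\<exists>l<L. \<Gamma> \<subseteq> R l) \<and>
     (\<forall>y\<in>interior \<Gamma>. \<forall>z\<in>interior \<Gamma>. \<forall>l1<L. \<forall>l2<L.
        (p l1 y \<le> p l2 y \<longleftrightarrow> p l1 z \<le> p l2 z))"

definition J_ge :: "nat \<Rightarrow> (nat \<Rightarrow> 'a) \<Rightarrow> (nat \<Rightarrow> 'a \<Rightarrow> real) \<Rightarrow> nat \<Rightarrow> nat set" where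
  "J_ge Ns x uu i = {j \<in> {1..Ns}. uu j (x i) \<ge> uu i (x i)}"

definition J_le :: "nat \<Rightarrow> (nat \<Rightarrow> 'a) \<Rightarrow> (nat \<Rightarrow> 'a \<Rightarrow> real) \<Rightarrow> nat \<Rightarrow> nat set" where
  "J_le Ns x uu i = {j \<in> {1..Ns}. uu j (x i) \<le> uu i (x i)}"

end

theory Submission
  imports Defs
begin

text \<open>Along the segment, parametrized by a real s, the sampled pieces become affine functions
  g_0, ..., g_m of s at ordered nodes t_0 <= ... <= t_m, and the termination condition says that
  g_r and g_(r+1) cross somewhere in [t_r, t_(r+1)]. For nodes a <= b, either g_a already lies
  below g_b at t_b, or we recurse from the crossing point c of g_a and g_(a+1): the piece g_j found
  there lies above g_a at c but below it at t_b, so, both being affine, g_j stays above g_a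
  everywhere left of c, in particular at t_a. The case a > b and the bound for the maximum follow
  by negating all pieces.\<close>

lemma affine_fun_real_iff:
  "affine_fun (f :: real \<Rightarrow> real) \<longleftrightarrow> (\<exists>A B. \<forall>s. f s = A * s + B)"
  by (simp add: affine_fun_def)

lemma affine_fun_diff:
  assumes "affine_fun f" "affine_fun g"
  shows "affine_fun (\<lambda>z. f z - g z)"
proof -
  obtain c d c' d' where "\<forall>z. f z = inner c z + d" "\<forall>z. g z = inner c' z + d'"
    using assms unfolding affine_fun_def by blast
  then have "\<forall>z. f z - g z = inner (c - c') z + (d - d')"
    by (simp add: inner_diff_left)
  then show ?thesis
    unfolding affine_fun_def by blast
qed

lemma affine_fun_uminus:
  assumes "affine_fun f"
  shows "affine_fun (\<lambda>z. - f z)"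
proof -
  obtain c d where "\<forall>z. f z = inner c z + d"
    using assms unfolding affine_fun_def by blast
  then have "\<forall>z. - f z = inner (- c) z + (- d)"
    by simp
  then show ?thesis
    unfolding affine_fun_def by blast
qed

lemma affine_fun_along_line:
  assumes "affine_fun f"
  shows "affine_fun (\<lambda>s::real. f (P + s *\<^sub>R v))"
proof -
  obtain c d where "\<forall>z. f z = inner c z + d"
    using assms unfolding affine_fun_def by blast
  then have "\<forall>s. f (P + s *\<^sub>R v) = inner c v * s + (inner c P + d)"
    by (simp add: inner_add_right algebra_simps)
  then show ?thesis
    unfolding affine_fun_real_iff by blast
qed

lemma affine_fun_real_zero_between:
  fixes f :: "real \<Rightarrow> real"
  assumes "affine_fun f" "f a * f b \<le> 0" "a \<le> b"
  shows "\<exists>c. a \<le> c \<and> c \<le> b \<and> f c = 0"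
proof -
  obtain A B where f: "\<And>s. f s = A * s + B"
    using assms(1) unfolding affine_fun_real_iff by blast
  have cont: "continuous_on {a..b} f"
    unfolding f by (intro continuous_intros)
  consider "f a \<le> 0" "0 \<le> f b" | "0 \<le> f a" "f b \<le> 0"
    using assms(2) by (auto simp: mult_le_0_iff)
  then show ?thesis
  proof cases
    case 1
    then show ?thesis using IVT'[OF _ _ assms(3) cont] by auto
  next
    case 2
    then show ?thesis using IVT2'[OF _ _ assms(3) cont] by auto
  qed
qed

lemma affine_fun_real_nonneg_left:
  fixes h :: "real \<Rightarrow> real"
  assumes "affine_fun h" "0 \<le> h c" "h d < 0" "c \<le> d" "s \<le> c"
  shows "0 \<le> h s"
proof -
  obtain A B where h: "\<And>s. h s = A * s + B"
    using assms(1) unfolding affine_fun_real_iff by blast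
  have "A * (d - c) < 0"
    using assms(2,3) unfolding h by (simp add: algebra_simps)
  then have "A < 0"
    using assms(4) by (simp add: mult_less_0_iff)
  then have "0 \<le> A * (s - c)"
    using assms(5) by (simp add: mult_nonpos_nonpos)
  then show ?thesis
    using assms(2) unfolding h by (simp add: algebra_simps)
qed

definition crossing_chain :: "nat \<Rightarrow> (nat \<Rightarrow> real) \<Rightarrow> (nat \<Rightarrow> real \<Rightarrow> real) \<Rightarrow> bool" where
  "crossing_chain m t g \<longleftrightarrow>
     (\<forall>r\<le>m. affine_fun (g r)) \<and> (\<forall>r<m. t r \<le> t (Suc r)) \<and>
     (\<forall>r<m. (g r (t r) - g (Suc r) (t r)) * (g r (t (Suc r)) - g (Suc r) (t (Suc r))) \<le> 0)"

lemma crossing_chain_uminus: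
  assumes "crossing_chain m t g"
  shows "crossing_chain m t (\<lambda>r s. - g r s)"
  using assms unfolding crossing_chain_def by (auto simp: affine_fun_uminus algebra_simps)

lemma crossing_chain_crossing_point:
  assumes "crossing_chain m t g" "r < m"
  shows "\<exists>c. t r \<le> c \<and> c \<le> t (Suc r) \<and> g r c = g (Suc r) c"
proof -
  have "affine_fun (\<lambda>s. g r s - g (Suc r) s)"
    using assms by (simp add: crossing_chain_def affine_fun_diff)
  then show ?thesis
    using affine_fun_real_zero_between[of "\<lambda>s. g r s - g (Suc r) s" "t r" "t (Suc r)"] assms
    unfolding crossing_chain_def by auto
qed

lemma crossing_chain_nodes_mono:
  assumes "crossing_chain m t g" "a \<le> b" "b \<le> m"
  shows "t a \<le> t b"
proof (rule lift_Suc_mono_le_ivl[of "{..<m}"])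
  show "t r \<le> t (Suc r)" if "r \<in> {..<m}" for r
    using assms(1) that unfolding crossing_chain_def by simp
qed (use assms(2,3) in auto)

lemma crossing_chain_below_right:
  assumes chain: "crossing_chain m t g" and "b \<le> m"
  shows "a \<le> b \<Longrightarrow> s \<le> t a \<Longrightarrow> \<exists>j\<le>m. g a s \<le> g j s \<and> g j (t b) \<le> g b (t b)"
proof (induction "b - a" arbitrary: a s)
  case 0
  then have "a = b" by simp
  then show ?case using \<open>b \<le> m\<close> by (intro exI[of _ b]) simp
next
  case (Suc d)
  show ?case
  proof (cases "g a (t b) \<le> g b (t b)")
    case True
    then show ?thesis using Suc.prems \<open>b \<le> m\<close> by (intro exI[of _ a]) simp
  next
    case above: False
    have "a < b" "d = b - Suc a" using Suc.hyps(2) by simp_all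
    then have "a < m" using \<open>b \<le> m\<close> by simp
    then obtain c where c: "t a \<le> c" "c \<le> t (Suc a)" "g a c = g (Suc a) c"
      using crossing_chain_crossing_point[OF chain] by blast
    obtain j where j: "j \<le> m" "g (Suc a) c \<le> g j c" "g j (t b) \<le> g b (t b)"
      using Suc.hyps(1)[OF \<open>d = b - Suc a\<close>] \<open>a < b\<close> c(2) by auto
    have "t (Suc a) \<le> t b"
      using crossing_chain_nodes_mono[OF chain _ \<open>b \<le> m\<close>] \<open>a < b\<close> by simp
    moreover have "affine_fun (\<lambda>z. g j z - g a z)"
      using chain j(1) \<open>a < m\<close> by (simp add: crossing_chain_def affine_fun_diff)
    ultimately have "0 \<le> g j s - g a s"
      using affine_fun_real_nonneg_left[of "\<lambda>z. g j z - g a z" c "t b" s] c j above Suc.prems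
      by auto
    then show ?thesis using j by auto
  qed
qed

lemma crossing_chain_below:
  assumes chain: "crossing_chain m t g" and "a \<le> m" "b \<le> m"
  shows "\<exists>j\<le>m. g a (t a) \<le> g j (t a) \<and> g j (t b) \<le> g b (t b)"
proof (cases "a \<le> b")
  case True
  then show ?thesis using crossing_chain_below_right[OF chain \<open>b \<le> m\<close>] by blast
next
  case False
  then show ?thesis
    using crossing_chain_below_right[OF crossing_chain_uminus[OF chain] \<open>a \<le> m\<close>, of b "t b"]
    by auto
qed

lemma closed_segment_param_by_dist:
  assumes "z \<in> closed_segment P Q"
  shows "z = P + (dist P z / norm (Q - P)) *\<^sub>R (Q - P)"
proof -
  obtain u where u: "0 \<le> u" "z = P + u *\<^sub>R (Q - P)"
    using assms unfolding closed_segment_def by (auto simp: algebra_simps)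
  show ?thesis
  proof (cases "Q = P")
    case False
    then show ?thesis using u by (simp add: dist_norm)
  qed (use u in simp)
qed

lemma affine_pieces_on_segment_below:
  fixes f :: "nat \<Rightarrow> 'a::euclidean_space \<Rightarrow> real" and z :: "nat \<Rightarrow> 'a"
  assumes affine: "\<And>r. r \<le> m \<Longrightarrow> affine_fun (f r)"
    and on_segment: "\<And>r. r \<le> m \<Longrightarrow> z r \<in> closed_segment P Q"
    and ordered: "\<forall>r<m. dist P (z r) \<le> dist P (z (Suc r))"
    and crossing: "\<forall>r<m. (f r (z r) - f (Suc r) (z r)) * (f r (z (Suc r)) - f (Suc r) (z (Suc r))) \<le> 0"
    and "a \<le> m" "b \<le> m"
  shows "\<exists>j\<le>m. f a (z a) \<le> f j (z a) \<and> f j (z b) \<le> f b (z b)"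
proof -
  define t where "t r = dist P (z r) / norm (Q - P)" for r
  define g where "g r s = f r (P + s *\<^sub>R (Q - P))" for r s
  have g_t: "g r (t q) = f r (z q)" if "q \<le> m" for r q
    using closed_segment_param_by_dist[OF on_segment[OF that]] unfolding g_def t_def by simp
  have "affine_fun (g r)" if "r \<le> m" for r
    unfolding g_def using affine_fun_along_line[OF affine[OF that]] .
  moreover have "t r \<le> t (Suc r)" if "r < m" for r
    using ordered that unfolding t_def by (simp add: divide_right_mono)
  moreover have "(g r (t r) - g (Suc r) (t r)) * (g r (t (Suc r)) - g (Suc r) (t (Suc r))) \<le> 0"
    if "r < m" for r
    using crossing that by (simp add: g_t)
  ultimately have "crossing_chain m t g"
    unfolding crossing_chain_def by blast
  then show ?thesis
    using crossing_chain_below[of m t g a b] \<open>a \<le> m\<close> \<open>b \<le> m\<close> by (simp add: g_t)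
qed

theorem mainTheorem4:
  fixes \<Omega> :: "'a::euclidean_space set"
    and ustar :: "'a \<Rightarrow> real"
    and L :: nat and R :: "nat \<Rightarrow> 'a set" and p :: "nat \<Rightarrow> 'a \<Rightarrow> real"
    and Ns :: nat and x :: "nat \<Rightarrow> 'a" and uu :: "nat \<Rightarrow> 'a \<Rightarrow> real"
    and \<alpha> \<beta> m :: nat and y :: "nat \<Rightarrow> nat"
  assumes \<Omega>_poly: "convex \<Omega>" "polyhedron \<Omega>"
    and pwa: "is_cont_pwa \<Omega> ustar L R p"
    and samples: "\<forall>i\<in>{1..Ns}. x i \<in> \<Omega> \<and>
        (\<exists>\<Gamma> l. l < L \<and> uo_region \<Gamma> L R p \<and> \<Gamma> \<subseteq> R l \<and> x i \<in> interior \<Gamma> \<and> uu i = p l)"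
    and ab: "\<alpha> \<in> {1..Ns}" "\<beta> \<in> {1..Ns}"
    and y_enum: "bij_betw y {0..m} {i \<in> {1..Ns}. x i \<in> closed_segment (x \<alpha>) (x \<beta>)}"
    and y_ends: "y 0 = \<alpha>" "y m = \<beta>"
    and y_ord: "\<forall>r<m. dist (x \<alpha>) (x (y r)) \<le> dist (x \<alpha>) (x (y (Suc r)))"
    and term_cond: "\<forall>r<m.
        (uu (y r) (x (y r)) - uu (y (Suc r)) (x (y r))) *
        (uu (y r) (x (y (Suc r))) - uu (y (Suc r)) (x (y (Suc r)))) \<le> 0"
  shows "\<forall>i\<in>{1..Ns}. \<forall>k\<in>{1..Ns}.
           x i \<in> closed_segment (x \<alpha>) (x \<beta>) \<and> x k \<in> closed_segment (x \<alpha>) (x \<beta>) \<longrightarrow>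
           Min ((\<lambda>j. uu j (x k)) ` J_ge Ns x uu i) \<le> uu k (x k) \<and>
           Max ((\<lambda>j. uu j (x k)) ` J_le Ns x uu i) \<ge> uu k (x k)"
proof (intro ballI impI)
  fix i k assume "i \<in> {1..Ns}" "k \<in> {1..Ns}"
    and "x i \<in> closed_segment (x \<alpha>) (x \<beta>) \<and> x k \<in> closed_segment (x \<alpha>) (x \<beta>)"
  then have "i \<in> y ` {0..m}" "k \<in> y ` {0..m}"
    using bij_betw_imp_surj_on[OF y_enum] by auto
  then obtain a b where a: "a \<le> m" "i = y a" and b: "b \<le> m" "k = y b"
    by auto
  have y_in: "y r \<in> {1..Ns}" "x (y r) \<in> closed_segment (x \<alpha>) (x \<beta>)" if "r \<le> m" for r
    using bij_betw_apply[OF y_enum] that by auto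
  have affine: "affine_fun (uu (y r))" if "r \<le> m" for r
    using samples pwa y_in(1)[OF that] unfolding is_cont_pwa_def by fastforce
  obtain j1 where j1: "j1 \<le> m" "uu i (x i) \<le> uu (y j1) (x i)" "uu (y j1) (x k) \<le> uu k (x k)"
    using affine_pieces_on_segment_below[OF affine y_in(2) y_ord term_cond a(1) b(1)] a b by blast
  obtain j2 where j2: "j2 \<le> m" "uu (y j2) (x i) \<le> uu i (x i)" "uu k (x k) \<le> uu (y j2) (x k)"
    using affine_pieces_on_segment_below[of m "\<lambda>r z. - uu (y r) z", OF affine_fun_uminus[OF affine]
        y_in(2) y_ord _ a(1) b(1)] term_cond a b
    by (auto simp: algebra_simps)
  have "y j1 \<in> J_ge Ns x uu i" "y j2 \<in> J_le Ns x uu i"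
    using j1 j2 y_in(1) unfolding J_ge_def J_le_def by auto
  moreover have "finite (J_ge Ns x uu i)" "finite (J_le Ns x uu i)"
    unfolding J_ge_def J_le_def by simp_all
  ultimately show "Min ((\<lambda>j. uu j (x k)) ` J_ge Ns x uu i) \<le> uu k (x k) \<and>
      Max ((\<lambda>j. uu j (x k)) ` J_le Ns x uu i) \<ge> uu k (x k)"
    using j1(3) j2(3) by (meson Min_le Max_ge finite_imageI image_eqI order.trans)
qed

end
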